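(* Let $\varphi_t(\theta)=\theta+t\omega\pmod 1$ on $\mathbb{T}^d$ with $\omega\in\mathcal{D}_{c,\tau}$, and let $g(s)=2\sin^2(\pi s)$ on $[0,1]$. If $h\in C^l(\mathbb{T}^d,\mathbb{R})$ with $l>d+2\tau$, then there is a constant $C>0$ such that for all $\theta\in\mathbb{T}^d$ and all $T>0$, \[ \left|\frac1T\int_0^T g\!\left(\tfrac tT\right)h(\theta+t\omega)\,dt-\int_{\mathbb{T}^d}h\,d\theta\right|\le C\,T^{-2}. \]
   Context: A vector $\omega\in\mathbb{R}^d$ is Diophantine, $\omega\in\mathcal{D}_{c,\tau}$ (with $c>0$, $\tau\ge d-1$), if $|k\cdot\omega|>c\|k\|^{-\tau}$ for all $k\in\mathbb{Z}^d\setminus\{0\}$. $d\theta$ denotes normalized Lebesgue measure on $\mathbb{T}^d=\mathbb{R}^d/\mathbb{Z}^d$. *)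

theory Defs
  imports "HOL-Analysis.Analysis"
begin

fun Ck :: "nat \<Rightarrow> ('a::euclidean_space \<Rightarrow> real) \<Rightarrow> bool" where
  "Ck 0 f = continuous_on UNIV f"
| "Ck (Suc n) f = (\<exists>f'. (\<forall>x. (f has_derivative f' x) (at x)) \<and> (\<forall>v. Ck n (\<lambda>x. f' x v)))"

definition int_vec :: "real^'d \<Rightarrow> bool" where
  "int_vec k \<longleftrightarrow> (\<forall>i. k $ i \<in> \<int>)"

definition diophantine :: "real \<Rightarrow> real \<Rightarrow> real^'d \<Rightarrow> bool" where
  "diophantine c \<tau> \<omega> \<longleftrightarrow> c > 0 \<and> \<tau> \<ge> real CARD('d) - 1 \<and>
     (\<forall>k::real^'d. int_vec k \<and> k \<noteq> 0 \<longrightarrow> \<bar>k \<bullet> \<omega>\<bar> > c * norm k powr (-\<tau>))"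

text \<open>Z^d-periodic functions = functions on the torus.\<close>
definition torus_periodic :: "(real^'d \<Rightarrow> real) \<Rightarrow> bool" where
  "torus_periodic h \<longleftrightarrow> (\<forall>x k. int_vec k \<longrightarrow> h (x + k) = h x)"

definition gw :: "real \<Rightarrow> real" where
  "gw s = 2 * (sin (pi * s))^2"

end

theory Submission
  imports Defs
begin

text \<open>Expand \<open>h\<close> in its Fourier series \<open>\<Sum>\<^sub>k c\<^sub>k exp (2\<pi>i k \<bullet> \<theta>)\<close>. The weight \<open>g\<close> has mean one,
  so the zero mode contributes exactly \<open>\<integral>h\<close> to the weighted average along the orbit. For \<open>k \<noteq> 0\<close>
  the weight and its derivative vanish at both ends of \<open>[0, T]\<close>, so two integrations by parts
  bound the weighted average of \<open>exp (2\<pi>i k \<bullet> (\<theta> + t\<omega>))\<close> by \<open>1 / ((k \<bullet> \<omega>) T)\<^sup>2\<close>, which the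
  Diophantine condition turns into \<open>|k|\<^sup>2\<^sup>\<tau> / (c T)\<^sup>2\<close>. The resulting series
  \<open>\<Sum>\<^sub>k |c\<^sub>k| (1 + |k|)\<^sup>2\<^sup>\<tau>\<close> converges because \<open>l\<close>-th order finite differences give
  \<open>c\<^sub>k = O(|k|\<^sup>-\<^sup>l)\<close> and \<open>l - 2\<tau> > d\<close>. That the Fourier series of \<open>h\<close> converges to \<open>h\<close> follows
  from uniqueness of Fourier coefficients, proved by Stone-Weierstrass approximation on the torus
  embedded in \<open>\<real>\<^sup>2\<^sup>d\<close>.\<close>

section \<open>Integer vectors and lattice-periodic functions\<close>

lemma int_vec_zero [simp]: "int_vec 0"
  by (simp add: int_vec_def)

lemma int_vec_add: "int_vec a \<Longrightarrow> int_vec b \<Longrightarrow> int_vec (a + b)"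
  by (auto simp: int_vec_def)

lemma int_vec_minus [intro]: "int_vec a \<Longrightarrow> int_vec (- a)"
  by (auto simp: int_vec_def)

lemma int_vec_diff [intro]: "int_vec a \<Longrightarrow> int_vec b \<Longrightarrow> int_vec (a - b)"
  by (auto simp: int_vec_def)

lemma int_vec_axis [intro]: "n \<in> \<int> \<Longrightarrow> int_vec (axis j n)"
  by (auto simp: int_vec_def axis_def)

lemma inner_int_vec_in_Ints: "int_vec a \<Longrightarrow> int_vec b \<Longrightarrow> a \<bullet> b \<in> \<int>"
  unfolding inner_vec_def int_vec_def by (auto intro!: Ints_sum Ints_mult simp: real_inner_1_right)

lemma norm_int_vec_ge_1:
  fixes k :: "real^'d"
  assumes "int_vec k" "k \<noteq> 0"
  shows "1 \<le> norm k"
proof -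
  obtain j where "k $ j \<noteq> 0" using assms by (auto simp: vec_eq_iff)
  moreover have "k $ j \<in> \<int>" using assms by (auto simp: int_vec_def)
  ultimately have "1 \<le> \<bar>k $ j\<bar>" by (rule Ints_nonzero_abs_ge1[rotated])
  then show ?thesis using component_le_norm_cart[of k j] by linarith
qed

lemma vec_nth_One [simp]: "(One::real^'d) $ i = 1"
  by (simp add: cart_eq_inner_axis)

lemma sum_Basis_vec_nth [simp]: "(\<Sum>b\<in>(Basis::(real^'d) set). b $ i) = 1"
  using vec_nth_One[of i] by (simp add: sum_component)

definition lattice_floor :: "real^'d \<Rightarrow> real^'d" where
  "lattice_floor x = (\<chi> i. of_int \<lfloor>x $ i\<rfloor>)"

lemma int_vec_lattice_floor: "int_vec (lattice_floor x)"
  by (auto simp: lattice_floor_def int_vec_def)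

lemma diff_lattice_floor_in_unit_cube: "x - lattice_floor x \<in> cbox 0 One"
  by (auto simp: lattice_floor_def mem_box_cart) linarith

definition lattice_periodic :: "(real^'d \<Rightarrow> 'b) \<Rightarrow> bool" where
  "lattice_periodic f \<longleftrightarrow> (\<forall>x k. int_vec k \<longrightarrow> f (x + k) = f x)"

lemma lattice_periodicD: "lattice_periodic f \<Longrightarrow> int_vec k \<Longrightarrow> f (x + k) = f x"
  by (simp add: lattice_periodic_def)

lemma lattice_periodic_reduce: "lattice_periodic f \<Longrightarrow> f (x - lattice_floor x) = f x"
  using lattice_periodicD[of f "- lattice_floor x" x] int_vec_lattice_floor by auto

lemma lattice_periodic_bounded:
  fixes f :: "real^'d \<Rightarrow> 'b::real_normed_vector"
  assumes "continuous_on UNIV f" "lattice_periodic f"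
  obtains M where "\<And>x. norm (f x) \<le> M"
proof -
  have "compact (f ` cbox 0 One)"
    by (rule compact_continuous_image[OF continuous_on_subset[OF assms(1)]]) auto
  then obtain M where M: "\<And>y. y \<in> f ` cbox 0 One \<Longrightarrow> norm y \<le> M"
    using compact_imp_bounded bounded_iff by metis
  have "norm (f x) \<le> M" for x
    using M[of "f x"] diff_lattice_floor_in_unit_cube[of x] lattice_periodic_reduce[OF assms(2), of x]
    by (metis image_eqI)
  then show ?thesis using that by blast
qed

section \<open>Translation invariance of the integral over the unit cube\<close>

lemma cbox_inter_halfspace_ge:
  "cbox a b \<inter> {x. x \<bullet> axis j 1 \<ge> c} = cbox (\<chi> i. if i = j then max (a $ j) c else a $ i) (b::real^'d)"
  by (auto simp: mem_box_cart inner_axis split: if_splits)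

lemma cbox_inter_halfspace_le:
  "cbox a b \<inter> {x. x \<bullet> axis j 1 \<le> c} = cbox a (\<chi> i. if i = j then min (b $ j) c else (b::real^'d) $ i)"
  by (auto simp: mem_box_cart inner_axis split: if_splits)

context
  fixes f :: "real^'d \<Rightarrow> 'b::banach"
  assumes cont: "continuous_on UNIV f" and per: "lattice_periodic f"
begin

lemma integrable_on_cbox_continuous: "f integrable_on cbox u v"
  by (rule integrable_continuous, rule continuous_on_subset[OF cont]) auto

lemma integral_unit_box_lattice_shift:
  assumes "int_vec m"
  shows "integral (cbox (a + m) (a + m + One)) f = integral (cbox a (a + One)) f"
proof -
  have "integral (cbox (a + m) (a + m + One)) f
      = integral (cbox (a + m - m) (a + m + One - m)) (\<lambda>x. f (x + m))"
    by (rule integral_shift_cbox[symmetric])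
  then show ?thesis using lattice_periodicD[OF per assms] by (simp add: algebra_simps)
qed

text \<open>Moving the unit box by at most 1 along an axis cuts off a slab at one end that
  reappears, translated by the basis vector, at the other end.\<close>
lemma integral_unit_box_axis_shift_le_1:
  assumes s: "0 \<le> s" "s \<le> 1"
  shows "integral (cbox (a + s *\<^sub>R axis j 1) (a + s *\<^sub>R axis j 1 + One)) f = integral (cbox a (a + One)) f"
proof -
  define e :: "real^'d" where "e = axis j 1"
  have eB: "e \<in> Basis" by (simp add: e_def)
  define P1 where "P1 = cbox a (\<chi> i. if i = j then a $ j + s else a $ i + 1)"
  define P2 where "P2 = cbox (\<chi> i. if i = j then a $ j + s else a $ i) (a + One)"
  define P3 where "P3 = cbox (\<chi> i. if i = j then a $ j + 1 else a $ i) (\<chi> i. if i = j then a $ j + s + 1 else a $ i + 1)"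
  have "integral (cbox a (a + One)) f
      = integral (cbox a (a + One) \<inter> {x. x \<bullet> e \<le> a $ j + s}) f
      + integral (cbox a (a + One) \<inter> {x. x \<bullet> e \<ge> a $ j + s}) f"
    by (rule integral_split[OF integrable_on_cbox_continuous eB])
  also have "cbox a (a + One) \<inter> {x. x \<bullet> e \<le> a $ j + s} = P1"
    unfolding e_def cbox_inter_halfspace_le P1_def
    by (rule arg_cong2[where f=cbox]) (use s in \<open>auto simp: vec_eq_iff\<close>)
  also have "cbox a (a + One) \<inter> {x. x \<bullet> e \<ge> a $ j + s} = P2"
    unfolding e_def cbox_inter_halfspace_ge P2_def
    by (rule arg_cong2[where f=cbox]) (use s in \<open>auto simp: vec_eq_iff\<close>)
  finally have "integral (cbox a (a + One)) f = integral P1 f + integral P2 f" .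
  moreover have "integral (cbox (a + s *\<^sub>R e) (a + s *\<^sub>R e + One)) f
      = integral (cbox (a + s *\<^sub>R e) (a + s *\<^sub>R e + One) \<inter> {x. x \<bullet> e \<le> a $ j + 1}) f
      + integral (cbox (a + s *\<^sub>R e) (a + s *\<^sub>R e + One) \<inter> {x. x \<bullet> e \<ge> a $ j + 1}) f"
    by (rule integral_split[OF integrable_on_cbox_continuous eB])
  moreover have "cbox (a + s *\<^sub>R e) (a + s *\<^sub>R e + One) \<inter> {x. x \<bullet> e \<le> a $ j + 1} = P2"
    unfolding e_def cbox_inter_halfspace_le P2_def
    by (rule arg_cong2[where f=cbox]) (use s in \<open>auto simp: vec_eq_iff axis_def\<close>)
  moreover have "cbox (a + s *\<^sub>R e) (a + s *\<^sub>R e + One) \<inter> {x. x \<bullet> e \<ge> a $ j + 1} = P3"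
    unfolding e_def cbox_inter_halfspace_ge P3_def
    by (rule arg_cong2[where f=cbox]) (use s in \<open>auto simp: vec_eq_iff axis_def\<close>)
  moreover have "integral P3 f = integral P1 f"
  proof -
    have "integral P3 f = integral (cbox ((\<chi> i. if i = j then a $ j + 1 else a $ i) - e)
        ((\<chi> i. if i = j then a $ j + s + 1 else a $ i + 1) - e)) (\<lambda>x. f (x + e))"
      unfolding P3_def by (rule integral_shift_cbox[symmetric])
    moreover have "(\<lambda>x. f (x + e)) = f"
      by (intro ext lattice_periodicD[OF per]) (simp add: e_def int_vec_axis)
    moreover have "(\<chi> i. if i = j then a $ j + 1 else a $ i) - e = a"
      and "(\<chi> i. if i = j then a $ j + s + 1 else a $ i + 1) - e = (\<chi> i. if i = j then a $ j + s else a $ i + 1)"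
      by (auto simp: vec_eq_iff e_def axis_def)
    ultimately show ?thesis by (simp add: P1_def)
  qed
  ultimately show ?thesis by (simp add: e_def)
qed

lemma integral_unit_box_axis_shift:
  "integral (cbox (a + s *\<^sub>R axis j 1) (a + s *\<^sub>R axis j 1 + One)) f = integral (cbox a (a + One)) f"
proof -
  define r where "r = s - of_int \<lfloor>s\<rfloor>"
  have r: "0 \<le> r" "r \<le> 1" unfolding r_def by linarith+
  have "a + s *\<^sub>R axis j 1 = (a + r *\<^sub>R axis j 1) + axis j (of_int \<lfloor>s\<rfloor>)"
    by (simp add: r_def vec_eq_iff axis_def algebra_simps)
  then have "integral (cbox (a + s *\<^sub>R axis j 1) (a + s *\<^sub>R axis j 1 + One)) f
      = integral (cbox (a + r *\<^sub>R axis j 1) (a + r *\<^sub>R axis j 1 + One)) f"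
    using integral_unit_box_lattice_shift[of "axis j (of_int \<lfloor>s\<rfloor>)" "a + r *\<^sub>R axis j 1"]
    by (simp add: int_vec_axis add.assoc)
  also have "\<dots> = integral (cbox a (a + One)) f"
    by (rule integral_unit_box_axis_shift_le_1[OF r])
  finally show ?thesis .
qed

lemma integral_unit_box_translate: "integral (cbox a (a + One)) f = integral (cbox 0 One) f"
proof -
  have "integral (cbox (b + (\<Sum>j\<in>S. v j *\<^sub>R axis j 1)) (b + (\<Sum>j\<in>S. v j *\<^sub>R axis j 1) + One)) f
      = integral (cbox b (b + One)) f" if "finite S" for S b v
    using that
  proof (induction S rule: finite_induct)
    case (insert i S)
    then show ?case
      using integral_unit_box_axis_shift[of "b + (\<Sum>j\<in>S. v j *\<^sub>R axis j 1)" "v i" i]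
      by (simp add: algebra_simps)
  qed simp
  from this[of UNIV 0 "\<lambda>j. a $ j"] show ?thesis
    using basis_expansion[of a] by (simp add: scalar_mult_eq_scaleR)
qed

lemma integral_unit_cube_shift: "integral (cbox 0 One) (\<lambda>x. f (x + a)) = integral (cbox 0 One) f"
  using integral_shift_cbox[where f=f and a=a and b="a + One" and c=a] integral_unit_box_translate[of a] by simp

end

section \<open>Characters and Fourier coefficients\<close>

lemma integral_of_real_complex:
  assumes "f integrable_on S"
  shows "integral S (\<lambda>x. complex_of_real (f x)) = complex_of_real (integral S f)"
  using has_integral_of_real[OF integrable_integral[OF assms]] by (rule integral_unique)

definition torus_char :: "real^'d \<Rightarrow> real^'d \<Rightarrow> complex" where
  "torus_char k x = cis (2 * pi * (k \<bullet> x))"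

lemma torus_char_add: "torus_char k (x + y) = torus_char k x * torus_char k y"
  by (simp add: torus_char_def cis_mult inner_add_right algebra_simps)

lemma torus_char_mult: "torus_char k x * torus_char m x = torus_char (k + m) x"
  by (simp add: torus_char_def cis_mult inner_add_left algebra_simps)

lemma cnj_torus_char: "cnj (torus_char k x) = torus_char (- k) x"
  by (simp add: torus_char_def cis_cnj)

lemma norm_torus_char [simp]: "norm (torus_char k x) = 1"
  by (simp add: torus_char_def)

lemma torus_char_zero [simp]: "torus_char 0 x = 1"
  by (simp add: torus_char_def)

lemma lattice_periodic_torus_char: "int_vec k \<Longrightarrow> lattice_periodic (torus_char k)"
  unfolding lattice_periodic_def
  by (metis inner_int_vec_in_Ints torus_char_add mult.right_neutral cis_multiple_2pi torus_char_def mult.assoc)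

lemma continuous_on_torus_char [continuous_intros]: "continuous_on S (torus_char k)"
  unfolding torus_char_def by (intro continuous_intros)

lemma integral_torus_char:
  fixes k :: "real^'d"
  assumes k: "int_vec k"
  shows "integral (cbox 0 One) (torus_char k) = (if k = 0 then 1 else 0)"
proof (cases "k = 0")
  case True
  have "torus_char 0 = (\<lambda>x::real^'d. 1)" by auto
  with True show ?thesis by simp
next
  case False
  then obtain j where j: "k $ j \<noteq> 0" by (auto simp: vec_eq_iff)
  define a :: "real^'d" where "a = axis j (1 / (2 * k $ j))"
  txt \<open>Translation by \<open>a\<close> multiplies the character by \<open>-1\<close>.\<close>
  have "torus_char k a = -1" using j by (simp add: torus_char_def a_def inner_axis)
  moreover have "integral (cbox 0 One) (\<lambda>x. torus_char k (x + a)) = integral (cbox 0 One) (torus_char k)"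
    by (intro integral_unit_cube_shift continuous_on_torus_char lattice_periodic_torus_char k)
  ultimately show ?thesis using False by (simp add: torus_char_add)
qed

definition fourier_coeff :: "(real^'d \<Rightarrow> complex) \<Rightarrow> real^'d \<Rightarrow> complex" where
  "fourier_coeff F k = integral (cbox 0 One) (\<lambda>x. F x * torus_char (- k) x)"

lemma integrable_on_mult_torus_char:
  "continuous_on UNIV F \<Longrightarrow> (\<lambda>x. F x * torus_char k x) integrable_on cbox a b"
  by (intro integrable_continuous continuous_intros) (auto intro: continuous_on_subset)

lemma fourier_coeff_diff:
  assumes "continuous_on UNIV F" "continuous_on UNIV G"
  shows "fourier_coeff (\<lambda>x. F x - G x) k = fourier_coeff F k - fourier_coeff G k"
  unfolding fourier_coeff_def
  by (simp add: left_diff_distrib integral_diff integrable_on_mult_torus_char assms)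

lemma fourier_coeff_shift:
  assumes cont: "continuous_on UNIV F" and per: "lattice_periodic F" and k: "int_vec k"
  shows "fourier_coeff (\<lambda>x. F (x + w)) k = torus_char k w * fourier_coeff F k"
proof -
  have "fourier_coeff F k = integral (cbox 0 One) (\<lambda>x. F (x + w) * torus_char (- k) (x + w))"
    unfolding fourier_coeff_def
    by (rule integral_unit_cube_shift[symmetric])
      (auto intro!: continuous_intros cont simp: lattice_periodic_def lattice_periodicD[OF per]
        lattice_periodicD[OF lattice_periodic_torus_char[OF int_vec_minus[OF k]]])
  also have "\<dots> = torus_char (- k) w * fourier_coeff (\<lambda>x. F (x + w)) k"
    by (simp add: fourier_coeff_def torus_char_add mult_ac flip: integral_mult_right)
  finally show ?thesis by (simp add: torus_char_mult)
qed

lemma norm_fourier_coeff_le: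
  assumes "continuous_on UNIV F" and "\<And>x. norm (F x) \<le> B"
  shows "norm (fourier_coeff F k) \<le> B"
  using has_integral_bound[OF _ integrable_integral[OF integrable_on_mult_torus_char[OF assms(1)]],
      of B 0 One "- k"] assms(2) order_trans[OF norm_ge_zero assms(2)]
  unfolding fourier_coeff_def by (auto simp: norm_mult)

section \<open>Decay of Fourier coefficients\<close>

fun forward_diff :: "nat \<Rightarrow> real^'d \<Rightarrow> (real^'d \<Rightarrow> real) \<Rightarrow> real^'d \<Rightarrow> real" where
  "forward_diff 0 w f = f"
| "forward_diff (Suc n) w f = (\<lambda>x. forward_diff n w f (x + w) - forward_diff n w f x)"

lemma forward_diff_cmult: "forward_diff n w (\<lambda>y. c * f y) x = c * forward_diff n w f x"
  by (induction n arbitrary: x) (auto simp: algebra_simps)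

lemma has_derivative_forward_diff:
  assumes "\<And>x. (f has_derivative f' x) (at x)"
  shows "(forward_diff n w f has_derivative (\<lambda>u. forward_diff n w (\<lambda>y. f' y u) x)) (at x)"
proof (induction n arbitrary: x)
  case 0
  show ?case using assms by simp
next
  case (Suc n)
  have "((\<lambda>y. forward_diff n w f (y + w)) has_derivative (\<lambda>u. forward_diff n w (\<lambda>y. f' y u) (x + w))) (at x)"
    using has_derivative_compose[OF has_derivative_add_const[OF has_derivative_ident] Suc.IH[of "x + w"]]
    by simp
  from has_derivative_diff[OF this Suc.IH[of x]] show ?case by simp
qed

lemma lattice_periodic_forward_diff: "lattice_periodic f \<Longrightarrow> lattice_periodic (forward_diff n w f)"
  by (induction n) (auto simp: lattice_periodic_def, metis add.assoc add.commute)

lemma continuous_on_forward_diff: "continuous_on UNIV f \<Longrightarrow> continuous_on UNIV (forward_diff n w f)"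
proof (induction n)
  case (Suc n)
  have "continuous_on UNIV (\<lambda>x. forward_diff n w f (x + w))"
    by (rule continuous_on_compose2[OF Suc.IH[OF Suc.prems]]) (auto intro: continuous_intros)
  with Suc show ?case by (auto intro!: continuous_intros)
qed simp

lemma Ck_imp_continuous_on: "Ck n f \<Longrightarrow> continuous_on UNIV f"
  by (cases n) (auto intro: has_derivative_continuous_on)

lemma lattice_periodic_derivative:
  assumes deriv: "\<And>x. (f has_derivative f' x) (at x)" and per: "lattice_periodic f" and m: "int_vec m"
  shows "f' (x + m) = f' x"
proof -
  have "((\<lambda>y. f (y + m)) has_derivative f' (x + m)) (at x)"
    using has_derivative_compose[OF has_derivative_add_const[OF has_derivative_ident] deriv[of "x + m"]]
    by simp
  moreover have "(\<lambda>y. f (y + m)) = f" using lattice_periodicD[OF per m] by auto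
  ultimately show ?thesis using has_derivative_unique deriv by metis
qed

lemma forward_diff_Suc_mean_value:
  assumes deriv: "\<And>x. (f has_derivative f' x) (at x)"
  obtains z where "forward_diff (Suc n) w f x = forward_diff n w (\<lambda>y. f' y w) (x + z *\<^sub>R w)"
proof -
  define \<phi> where "\<phi> t = forward_diff n w f (x + t *\<^sub>R w)" for t
  have der: "(\<phi> has_real_derivative forward_diff n w (\<lambda>y. f' y w) (x + t *\<^sub>R w)) (at t)" for t
  proof -
    have "(\<phi> has_derivative (\<lambda>h. forward_diff n w (\<lambda>y. f' y (h *\<^sub>R w)) (x + t *\<^sub>R w))) (at t)"
      unfolding \<phi>_def
      by (rule has_derivative_compose[OF _ has_derivative_forward_diff[OF deriv]])
        (auto intro!: derivative_eq_intros)
    moreover have "f' y (h *\<^sub>R w) = h * f' y w" for y h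
      using linear_scale[OF has_derivative_linear[OF deriv]] by simp
    ultimately show ?thesis
      by (simp add: forward_diff_cmult has_field_derivative_def mult_commute_abs)
  qed
  then obtain z where "\<phi> 1 - \<phi> 0 = (1 - 0) * forward_diff n w (\<lambda>y. f' y w) (x + z *\<^sub>R w)"
    using MVT2[of 0 1 \<phi> "\<lambda>t. forward_diff n w (\<lambda>y. f' y w) (x + t *\<^sub>R w)"] der by auto
  then show ?thesis using that by (simp add: \<phi>_def)
qed

lemma forward_diff_bound:
  assumes "Ck n f" "lattice_periodic f"
  obtains M where "\<And>s x. \<bar>forward_diff n (s *\<^sub>R v) f x\<bar> \<le> M * \<bar>s\<bar> ^ n"
  using assms
proof (induction n arbitrary: f thesis)
  case 0
  then show ?case
    using lattice_periodic_bounded[OF Ck_imp_continuous_on[OF "0.prems"(2)] "0.prems"(3)] by auto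
next
  case (Suc n)
  obtain f' where deriv: "\<And>x. (f has_derivative f' x) (at x)" and Ck: "\<And>u. Ck n (\<lambda>x. f' x u)"
    using Suc.prems(2) by auto
  have "lattice_periodic (\<lambda>x. f' x v)"
    using lattice_periodic_derivative[OF deriv Suc.prems(3)] by (simp add: lattice_periodic_def)
  then obtain M where M: "\<And>s x. \<bar>forward_diff n (s *\<^sub>R v) (\<lambda>x. f' x v) x\<bar> \<le> M * \<bar>s\<bar> ^ n"
    using Suc.IH[OF _ Ck] by blast
  have "\<bar>forward_diff (Suc n) (s *\<^sub>R v) f x\<bar> \<le> M * \<bar>s\<bar> ^ Suc n" for s x
  proof -
    obtain z where "forward_diff (Suc n) (s *\<^sub>R v) f x
        = forward_diff n (s *\<^sub>R v) (\<lambda>y. f' y (s *\<^sub>R v)) (x + z *\<^sub>R (s *\<^sub>R v))"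
      using forward_diff_Suc_mean_value[OF deriv] by blast
    also have "\<dots> = s * forward_diff n (s *\<^sub>R v) (\<lambda>y. f' y v) (x + z *\<^sub>R (s *\<^sub>R v))"
      using linear_scale[OF has_derivative_linear[OF deriv]] by (simp add: forward_diff_cmult)
    finally show ?thesis
      using mult_left_mono[OF M, of "\<bar>s\<bar>"] by (simp add: abs_mult mult_ac)
  qed
  then show ?case using Suc.prems(1) by blast
qed

lemma fourier_coeff_forward_diff:
  assumes cont: "continuous_on UNIV f" and per: "lattice_periodic f" and k: "int_vec k"
  shows "fourier_coeff (\<lambda>x. of_real (forward_diff n w f x)) k
    = (torus_char k w - 1) ^ n * fourier_coeff (\<lambda>x. of_real (f x)) k"
proof (induction n)
  case (Suc n)
  have cont_n: "continuous_on UNIV (\<lambda>x. complex_of_real (forward_diff n w f x))"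
    by (intro continuous_intros continuous_on_forward_diff[OF cont])
  have "fourier_coeff (\<lambda>x. of_real (forward_diff (Suc n) w f x)) k
      = fourier_coeff (\<lambda>x. of_real (forward_diff n w f (x + w))) k
      - fourier_coeff (\<lambda>x. of_real (forward_diff n w f x)) k"
    using fourier_coeff_diff[OF continuous_on_compose2[OF cont_n, of UNIV "\<lambda>x. x + w"] cont_n]
    by (simp add: continuous_intros)
  also have "\<dots> = (torus_char k w - 1) * fourier_coeff (\<lambda>x. of_real (forward_diff n w f x)) k"
    using fourier_coeff_shift[OF cont_n _ k, of w] lattice_periodic_forward_diff[OF per, of n w]
    by (simp add: lattice_periodic_def algebra_simps)
  finally show ?case using Suc by simp
qed simp

lemma norm_le_card_mult_component:
  fixes k :: "real^'d"
  obtains j where "norm k \<le> real CARD('d) * \<bar>k $ j\<bar>"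
proof -
  have "Max (range (\<lambda>i. \<bar>k $ i\<bar>)) \<in> range (\<lambda>i. \<bar>k $ i\<bar>)" by (rule Max_in) auto
  then obtain j where j: "\<bar>k $ j\<bar> = Max (range (\<lambda>i. \<bar>k $ i\<bar>))" by (metis rangeE)
  have "norm k \<le> (\<Sum>i\<in>UNIV. \<bar>k $ i\<bar>)" by (rule norm_le_l1_cart)
  also have "\<dots> \<le> real CARD('d) * \<bar>k $ j\<bar>"
    using sum_bounded_above[of UNIV "\<lambda>i. \<bar>k $ i\<bar>" "\<bar>k $ j\<bar>"] by (simp add: j)
  finally show ?thesis by (rule that)
qed

text \<open>Shifting by \<open>w\<close> with \<open>k \<bullet> w = 1/2\<close> multiplies the \<open>k\<close>-th coefficient by \<open>-1\<close>, so the
  \<open>l\<close>-th difference along \<open>w\<close> multiplies it by \<open>(-2)^l\<close>.\<close>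
lemma norm_fourier_coeff_le_component:
  fixes h :: "real^'d \<Rightarrow> real"
  assumes cont: "continuous_on UNIV h" and per: "lattice_periodic h"
    and k: "int_vec k" "k $ j \<noteq> 0"
    and bound: "\<And>s x. \<bar>forward_diff l (s *\<^sub>R axis j 1) h x\<bar> \<le> M * \<bar>s\<bar> ^ l"
  shows "norm (fourier_coeff (\<lambda>x. of_real (h x)) k) \<le> M / (2 * \<bar>k $ j\<bar>) ^ l"
proof -
  define s where "s = 1 / (2 * k $ j)"
  define w where "w = s *\<^sub>R axis j (1::real)"
  have kw: "k \<bullet> w = 1 / 2"
    using k(2) by (simp add: w_def s_def inner_axis)
  have "torus_char k w = -1"
    unfolding torus_char_def kw by simp
  have "norm (fourier_coeff (\<lambda>x. of_real (h x)) k) \<le> 2 ^ l * norm (fourier_coeff (\<lambda>x. of_real (h x)) k)"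
    by (simp add: mult_le_cancel_right1)
  also have "\<dots> = norm (fourier_coeff (\<lambda>x. of_real (forward_diff l w h x)) k)"
    using fourier_coeff_forward_diff[OF cont per k(1), of l w] \<open>torus_char k w = -1\<close>
    by (simp add: norm_mult norm_power)
  also have "\<dots> \<le> M * \<bar>s\<bar> ^ l"
    by (rule norm_fourier_coeff_le) (auto intro!: continuous_intros continuous_on_forward_diff cont
        simp: w_def bound)
  also have "\<dots> = M / (2 * \<bar>k $ j\<bar>) ^ l"
    using k(2) by (simp add: s_def abs_mult power_one_over)
  finally show ?thesis .
qed

lemma norm_fourier_coeff_le_powr:
  fixes h :: "real^'d \<Rightarrow> real"
  assumes cont: "continuous_on UNIV h" and per: "lattice_periodic h" and k: "int_vec k" "k \<noteq> 0"
    and bound: "\<And>j s x. \<bar>forward_diff l (s *\<^sub>R axis j 1) h x\<bar> \<le> M j * \<bar>s\<bar> ^ l"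
  shows "norm (fourier_coeff (\<lambda>x. of_real (h x)) k)
    \<le> real CARD('d) ^ l * (\<Sum>j\<in>UNIV. \<bar>M j\<bar>) * (1 + norm k) powr (- real l)"
proof -
  define d where "d = real CARD('d)"
  have d: "1 \<le> d" by (simp add: d_def Suc_le_eq)
  obtain j where j: "norm k \<le> d * \<bar>k $ j\<bar>"
    using norm_le_card_mult_component unfolding d_def by blast
  have "1 \<le> norm k" using norm_int_vec_ge_1[OF k] .
  then have kj: "1 + norm k \<le> 2 * d * \<bar>k $ j\<bar>" using j d by linarith
  have "k $ j \<noteq> 0"
  proof
    assume "k $ j = 0"
    with kj \<open>1 \<le> norm k\<close> show False by simp
  qed
  have "norm (fourier_coeff (\<lambda>x. of_real (h x)) k) \<le> M j / (2 * \<bar>k $ j\<bar>) ^ l"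
    by (rule norm_fourier_coeff_le_component[OF cont per k(1) \<open>k $ j \<noteq> 0\<close> bound])
  also have "\<dots> \<le> \<bar>M j\<bar> * (1 / (2 * \<bar>k $ j\<bar>)) ^ l"
    by (simp add: power_one_over divide_right_mono)
  also have "\<dots> \<le> \<bar>M j\<bar> * (d / (1 + norm k)) ^ l"
  proof -
    have "1 / (2 * \<bar>k $ j\<bar>) = d / (2 * d * \<bar>k $ j\<bar>)" using d by simp
    also have "\<dots> \<le> d / (1 + norm k)"
      using d \<open>k $ j \<noteq> 0\<close> by (intro divide_left_mono kj mult_pos_pos) (auto simp: add_pos_nonneg)
    finally show ?thesis by (intro mult_left_mono power_mono) auto
  qed
  also have "\<dots> = d ^ l * \<bar>M j\<bar> * (1 + norm k) powr (- real l)"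
    by (simp add: powr_minus powr_realpow divide_inverse add_pos_nonneg power_mult_distrib power_inverse)
  also have "\<dots> \<le> d ^ l * (\<Sum>j\<in>UNIV. \<bar>M j\<bar>) * (1 + norm k) powr (- real l)"
    using member_le_sum[of j UNIV "\<lambda>j. \<bar>M j\<bar>"] d by (intro mult_right_mono mult_left_mono) auto
  finally show ?thesis by (simp add: d_def)
qed

lemma fourier_coeff_decay:
  fixes h :: "real^'d \<Rightarrow> real"
  assumes Ck: "Ck l h" and per: "lattice_periodic h"
  obtains M where "\<And>k. int_vec k \<Longrightarrow> norm (fourier_coeff (\<lambda>x. of_real (h x)) k) \<le> M * (1 + norm k) powr (- real l)"
proof -
  have "\<exists>M. \<forall>s x. \<bar>forward_diff l (s *\<^sub>R axis j 1) h x\<bar> \<le> M * \<bar>s\<bar> ^ l" for j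
    using forward_diff_bound[OF Ck per, of "axis j 1"] by blast
  then obtain Mj where Mj: "\<And>j s x. \<bar>forward_diff l (s *\<^sub>R axis j 1) h x\<bar> \<le> Mj j * \<bar>s\<bar> ^ l"
    by metis
  define M0 where "M0 = real CARD('d) ^ l * (\<Sum>j\<in>UNIV. \<bar>Mj j\<bar>)"
  have "M0 \<ge> 0" by (simp add: M0_def sum_nonneg)
  have "norm (fourier_coeff (\<lambda>x. of_real (h x)) k)
      \<le> (M0 + norm (fourier_coeff (\<lambda>x. of_real (h x)) 0)) * (1 + norm k) powr (- real l)"
    if "int_vec k" for k :: "real^'d"
  proof (cases "k = 0")
    case False
    have "norm (fourier_coeff (\<lambda>x. of_real (h x)) k) \<le> M0 * (1 + norm k) powr (- real l)"
      unfolding M0_def by (rule norm_fourier_coeff_le_powr[OF Ck_imp_continuous_on[OF Ck] per that False Mj])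
    also have "\<dots> \<le> (M0 + norm (fourier_coeff (\<lambda>x. of_real (h x)) 0)) * (1 + norm k) powr (- real l)"
      by (intro mult_right_mono) auto
    finally show ?thesis .
  qed (use \<open>M0 \<ge> 0\<close> in simp)
  then show ?thesis using that by blast
qed

section \<open>Lattice sums\<close>

lemma sum_int_powr_bounded:
  fixes p :: real
  assumes p: "p > 1"
  obtains A where "\<And>N::nat. (\<Sum>m\<in>{-int N..int N}. (1 + \<bar>real_of_int m\<bar>) powr (- p)) \<le> A"
proof -
  define g where "g n = (1 + real n) powr (- p)" for n :: nat
  have "summable (\<lambda>n. real (Suc n) powr (- p))"
    using p by (subst summable_Suc_iff) (simp add: summable_real_powr_iff)
  then have "summable g" by (simp add: g_def[abs_def] add.commute)
  have "(\<Sum>m\<in>{-int N..int N}. (1 + \<bar>real_of_int m\<bar>) powr (- p)) \<le> 2 * suminf g" for N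
  proof -
    let ?f = "\<lambda>m::int. (1 + \<bar>real_of_int m\<bar>) powr (- p)"
    have "{-int N..int N} \<subseteq> int ` {..N} \<union> (\<lambda>n. - int n) ` {..N}"
    proof
      fix m assume m: "m \<in> {-int N..int N}"
      show "m \<in> int ` {..N} \<union> (\<lambda>n. - int n) ` {..N}"
      proof (cases "m \<ge> 0")
        case True
        with m have "m = int (nat m)" "nat m \<in> {..N}" by auto
        then show ?thesis by blast
      next
        case False
        with m have "m = - int (nat (- m))" "nat (- m) \<in> {..N}" by auto
        then show ?thesis by blast
      qed
    qed
    then have "sum ?f {-int N..int N} \<le> sum ?f (int ` {..N} \<union> (\<lambda>n. - int n) ` {..N})"
      by (intro sum_mono2) auto
    also have "\<dots> \<le> sum ?f (int ` {..N}) + sum ?f ((\<lambda>n. - int n) ` {..N})"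
      by (simp add: sum_Un sum_nonneg)
    also have "\<dots> = 2 * sum g {..N}"
      by (simp add: sum.reindex inj_on_def g_def)
    also have "\<dots> \<le> 2 * suminf g"
      using sum_le_suminf[OF \<open>summable g\<close>, of "{..N}"] by (simp add: g_def)
    finally show ?thesis .
  qed
  then show ?thesis using that by blast
qed

lemma powr_one_plus_norm_le_prod:
  fixes k :: "real^'d"
  assumes "\<sigma> \<ge> 0"
  shows "(1 + norm k) powr (- \<sigma>) \<le> (\<Prod>i\<in>UNIV. (1 + \<bar>k $ i\<bar>) powr (- (\<sigma> / CARD('d))))"
proof -
  define d where "d = real CARD('d)"
  have d: "d > 0" by (simp add: d_def)
  have "(\<Prod>i\<in>UNIV. 1 + \<bar>k $ i\<bar>) \<le> (\<Prod>i\<in>(UNIV::'d set). 1 + norm k)"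
    by (intro prod_mono) (auto simp: component_le_norm_cart)
  then have "(\<Prod>i\<in>UNIV. 1 + \<bar>k $ i\<bar>) \<le> (1 + norm k) powr d"
    by (simp add: d_def powr_realpow add_pos_nonneg)
  then have "((1 + norm k) powr d) powr (- (\<sigma> / d)) \<le> (\<Prod>i\<in>UNIV. 1 + \<bar>k $ i\<bar>) powr (- (\<sigma> / d))"
    using assms d by (intro powr_mono2') (auto intro: prod_pos)
  then show ?thesis
    using d by (simp add: powr_powr prod_powr_distrib d_def)
qed

lemma sum_lattice_prod_le:
  fixes a :: "int \<Rightarrow> real" and S :: "(real^'d) set"
  assumes a: "\<And>m. 0 \<le> a m" and A: "\<And>N::nat. (\<Sum>m\<in>{-int N..int N}. a m) \<le> A"
    and S: "finite S" "S \<subseteq> {k. int_vec k}"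
  shows "(\<Sum>k\<in>S. \<Prod>i\<in>UNIV. a \<lfloor>k $ i\<rfloor>) \<le> A ^ CARD('d)"
proof -
  define \<iota> where "\<iota> k = (\<lambda>i. \<lfloor>k $ i\<rfloor>)" for k :: "real^'d"
  have k_int: "k $ i = of_int \<lfloor>k $ i\<rfloor>" if "k \<in> S" for k i
    using S that by (auto simp: int_vec_def)
  have inj: "inj_on \<iota> S"
    by (rule inj_onI) (metis \<iota>_def k_int vec_eq_iff)
  define N where "N = nat \<lceil>\<Sum>k\<in>S. \<Sum>i\<in>UNIV. \<bar>k $ i\<bar>\<rceil>"
  have N: "\<bar>k $ i\<bar> \<le> real N" if "k \<in> S" for k i
  proof -
    have "\<bar>k $ i\<bar> \<le> (\<Sum>i\<in>UNIV. \<bar>k $ i\<bar>)" by (rule member_le_sum) auto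
    also have "\<dots> \<le> (\<Sum>k\<in>S. \<Sum>i\<in>UNIV. \<bar>k $ i\<bar>)"
      using S that by (intro member_le_sum) (auto intro: sum_nonneg)
    finally show ?thesis unfolding N_def by linarith
  qed
  have "(\<Sum>k\<in>S. \<Prod>i\<in>UNIV. a \<lfloor>k $ i\<rfloor>) = (\<Sum>g\<in>\<iota> ` S. \<Prod>i\<in>UNIV. a (g i))"
    unfolding sum.reindex[OF inj] by (simp add: \<iota>_def)
  also have "\<dots> \<le> (\<Sum>g\<in>PiE (UNIV::'d set) (\<lambda>_. {-int N..int N}). \<Prod>i\<in>UNIV. a (g i))"
  proof (rule sum_mono2[where f = "\<lambda>g. \<Prod>i\<in>UNIV. a (g i)"])
    show "\<iota> ` S \<subseteq> PiE (UNIV::'d set) (\<lambda>_. {-int N..int N})"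
    proof
      fix g assume "g \<in> \<iota> ` S"
      then obtain k where k: "k \<in> S" "g = \<iota> k" by auto
      have "- int N \<le> \<lfloor>k $ i\<rfloor> \<and> \<lfloor>k $ i\<rfloor> \<le> int N" for i
        using N[OF k(1), of i] k_int[OF k(1), of i] by (auto simp: abs_le_iff)
      then show "g \<in> PiE (UNIV::'d set) (\<lambda>_. {-int N..int N})" by (auto simp: k \<iota>_def)
    qed
  qed (auto intro!: finite_PiE prod_nonneg a)
  also have "\<dots> = (\<Prod>i\<in>(UNIV::'d set). \<Sum>m\<in>{-int N..int N}. a m)"
    by (rule prod_sum_PiE[symmetric]) auto
  also have "\<dots> \<le> A ^ CARD('d)"
    using prod_mono[of UNIV "\<lambda>_. \<Sum>m\<in>{-int N..int N}. a m" "\<lambda>_. A"] A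
    by (simp add: sum_nonneg a)
  finally show ?thesis .
qed

lemma lattice_sum_powr_bounded:
  fixes \<sigma> :: real
  assumes \<sigma>: "\<sigma> > real CARD('d)"
  obtains B where "\<And>S::(real^'d) set. finite S \<Longrightarrow> S \<subseteq> {k. int_vec k} \<Longrightarrow>
    (\<Sum>k\<in>S. (1 + norm k) powr (- \<sigma>)) \<le> B"
proof -
  define a where "a m = (1 + \<bar>real_of_int m\<bar>) powr (- (\<sigma> / CARD('d)))" for m :: int
  have "\<sigma> / CARD('d) > 1" using \<sigma> by simp
  then obtain A where A: "\<And>N::nat. (\<Sum>m\<in>{-int N..int N}. a m) \<le> A"
    using sum_int_powr_bounded unfolding a_def by blast
  have "(\<Sum>k\<in>S. (1 + norm k) powr (- \<sigma>)) \<le> A ^ CARD('d)"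
    if "finite S" "S \<subseteq> {k. int_vec k}" for S :: "(real^'d) set"
  proof -
    have "(\<Sum>k\<in>S. (1 + norm k) powr (- \<sigma>)) \<le> (\<Sum>k\<in>S. \<Prod>i\<in>UNIV. a \<lfloor>k $ i\<rfloor>)"
      using that powr_one_plus_norm_le_prod[of \<sigma>] \<sigma>
      by (intro sum_mono) (auto simp: a_def int_vec_def subset_iff)
    also have "\<dots> \<le> A ^ CARD('d)"
      by (rule sum_lattice_prod_le[OF _ A that]) (simp add: a_def)
    finally show ?thesis .
  qed
  then show ?thesis using that by blast
qed

section \<open>Uniqueness of Fourier coefficients\<close>

inductive trig_poly :: "(real^'d \<Rightarrow> complex) \<Rightarrow> bool" where
  char: "int_vec k \<Longrightarrow> trig_poly (\<lambda>x. c * torus_char k x)"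
| add: "trig_poly f \<Longrightarrow> trig_poly g \<Longrightarrow> trig_poly (\<lambda>x. f x + g x)"

lemma trig_poly_const: "trig_poly (\<lambda>x. c)"
  using trig_poly.char[of 0 c] by simp

lemma trig_poly_sum: "finite I \<Longrightarrow> (\<And>i. i \<in> I \<Longrightarrow> trig_poly (f i)) \<Longrightarrow> trig_poly (\<lambda>x. \<Sum>i\<in>I. f i x)"
  by (induction I rule: finite_induct) (auto intro: trig_poly.add trig_poly_const)

lemma trig_poly_mult_char:
  assumes "trig_poly f" "int_vec k"
  shows "trig_poly (\<lambda>x. f x * (c * torus_char k x))"
  using assms
proof induction
  case (char m d)
  then show ?case
    using trig_poly.char[OF int_vec_add[of m k], of "d * c"] by (auto simp: mult_ac simp flip: torus_char_mult)
next
  case (add f g)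
  then show ?case by (simp add: distrib_right trig_poly.add)
qed

lemma trig_poly_mult:
  assumes "trig_poly f" "trig_poly g"
  shows "trig_poly (\<lambda>x. f x * g x)"
  using assms(2)
proof induction
  case (char k c)
  then show ?case by (rule trig_poly_mult_char[OF assms(1)])
next
  case (add g1 g2)
  then show ?case by (simp add: distrib_left trig_poly.add)
qed

lemma trig_poly_cnj: "trig_poly f \<Longrightarrow> trig_poly (\<lambda>x. cnj (f x))"
proof (induction rule: trig_poly.induct)
  case (char k c)
  then show ?case using trig_poly.char[of "- k" "cnj c"] by (auto simp: cnj_torus_char)
next
  case (add f g)
  then show ?case by (simp add: trig_poly.add)
qed

lemma continuous_on_trig_poly: "trig_poly f \<Longrightarrow> continuous_on S f"
  by (induction rule: trig_poly.induct) (auto intro!: continuous_intros)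

lemma integral_mult_trig_poly_eq_0:
  assumes cont: "continuous_on UNIV F" and coeff: "\<And>k. int_vec k \<Longrightarrow> fourier_coeff F k = 0"
    and "trig_poly q"
  shows "((\<lambda>x. F x * q x) has_integral 0) (cbox 0 One)"
  using \<open>trig_poly q\<close>
proof induction
  case (char k c)
  have "((\<lambda>x. F x * torus_char k x) has_integral fourier_coeff F (- k)) (cbox 0 One)"
    unfolding fourier_coeff_def by (simp add: integrable_integral integrable_on_mult_torus_char cont)
  then have "((\<lambda>x. F x * torus_char k x) has_integral 0) (cbox 0 One)"
    using coeff[OF int_vec_minus[OF char]] by simp
  from has_integral_mult_right[OF this, of c] show ?case
    by (simp add: mult.left_commute)
next
  case (add f g)
  from has_integral_add[OF add.IH] show ?case by (simp add: distrib_left)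
qed

definition torus_embedding :: "real^'d \<Rightarrow> (real^'d) \<times> (real^'d)" where
  "torus_embedding x = ((\<chi> i. cos (2 * pi * x $ i)), (\<chi> i. sin (2 * pi * x $ i)))"

lemma continuous_on_torus_embedding: "continuous_on S torus_embedding"
  unfolding torus_embedding_def by (intro continuous_intros continuous_on_vec_lambda)

lemma trig_poly_inner_torus_embedding:
  assumes "b \<in> Basis"
  shows "trig_poly (\<lambda>x::real^'d. of_real (torus_embedding x \<bullet> b))"
proof -
  obtain i where "b = (axis i 1, 0) \<or> b = (0, axis i 1)"
    using assms by (auto simp: Basis_prod_def Basis_vec_def)
  moreover have "(\<lambda>x. of_real (cos (2 * pi * x $ i)))
      = (\<lambda>x::real^'d. 1/2 * torus_char (axis i 1) x + 1/2 * torus_char (- axis i 1) x)"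
    and "(\<lambda>x. of_real (sin (2 * pi * x $ i)))
      = (\<lambda>x::real^'d. - \<i>/2 * torus_char (axis i 1) x + \<i>/2 * torus_char (- axis i 1) x)"
    by (auto simp: torus_char_def inner_axis' complex_eq_iff)
  then have "trig_poly (\<lambda>x::real^'d. of_real (cos (2 * pi * x $ i)))"
    and "trig_poly (\<lambda>x::real^'d. of_real (sin (2 * pi * x $ i)))"
    by (simp_all only:) (intro trig_poly.add trig_poly.char int_vec_axis int_vec_minus Ints_1)+
  ultimately show ?thesis
    by (auto simp: torus_embedding_def inner_Pair inner_axis)
qed

lemma trig_poly_polynomial:
  "real_polynomial_function p \<Longrightarrow> trig_poly (\<lambda>x::real^'d. complex_of_real (p (torus_embedding x)))"
proof (induction rule: real_polynomial_function.induct)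
  case (linear L)
  have lin: "linear L" using linear by (rule bounded_linear.linear)
  have expand: "complex_of_real (L y) = (\<Sum>b\<in>Basis. of_real (y \<bullet> b) * of_real (L b))" for y
  proof -
    have "L y = L (\<Sum>b\<in>Basis. (y \<bullet> b) *\<^sub>R b)" by (simp only: euclidean_representation)
    then show ?thesis by (simp add: linear_sum[OF lin] linear_scale[OF lin])
  qed
  have "trig_poly (\<lambda>x. \<Sum>b\<in>Basis. of_real (torus_embedding x \<bullet> b) * of_real (L b))"
    by (intro trig_poly_sum trig_poly_mult trig_poly_inner_torus_embedding trig_poly_const) auto
  then show ?case by (simp only: expand[symmetric])
qed (auto intro: trig_poly_const trig_poly.add trig_poly_mult)

lemma torus_embedding_eq_imp_int_vec:
  assumes "torus_embedding x = torus_embedding y"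
  shows "int_vec (y - x)"
  unfolding int_vec_def
proof
  fix i
  from assms have "sin (2 * pi * y $ i) = sin (2 * pi * x $ i) \<and> cos (2 * pi * y $ i) = cos (2 * pi * x $ i)"
    by (auto simp: torus_embedding_def vec_eq_iff)
  then obtain n :: int where "2 * pi * y $ i = 2 * pi * x $ i + 2 * pi * n"
    using sin_cos_eq_iff by blast
  then have "(2 * pi) * y $ i = (2 * pi) * (x $ i + n)" by (simp add: algebra_simps)
  then have "(y - x) $ i = n" by simp
  then show "(y - x) $ i \<in> \<int>" by simp
qed

lemma lattice_periodic_torus_embedding: "lattice_periodic torus_embedding"
  unfolding lattice_periodic_def
proof (intro allI impI)
  fix x m :: "real^'d"
  assume m: "int_vec m"
  have "sin (2 * pi * (x + m) $ i) = sin (2 * pi * x $ i) \<and> cos (2 * pi * (x + m) $ i) = cos (2 * pi * x $ i)" for i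
  proof -
    obtain n where n: "m $ i = of_int n" using m by (auto simp: int_vec_def elim: Ints_cases)
    show ?thesis
      by (rule sin_cos_eq_iff[THEN iffD2], rule exI[of _ n]) (simp add: n algebra_simps)
  qed
  then show "torus_embedding (x + m) = torus_embedding x"
    by (simp add: torus_embedding_def vec_eq_iff)
qed

text \<open>The embedding identifies the torus with a compact subset of \<open>\<real>\<^sup>2\<^sup>d\<close>; since a continuous map
  from a compact space is a quotient map, continuous periodic functions factor continuously through it.\<close>
lemma lattice_periodic_factor_torus_embedding:
  fixes F :: "real^'d \<Rightarrow> complex"
  assumes cont: "continuous_on UNIV F" and per: "lattice_periodic F"
  obtains G where "continuous_on (torus_embedding ` cbox 0 One) G" "\<And>x. F x = G (torus_embedding x)"
proof -
  define X where "X = torus_embedding ` cbox (0::real^'d) One"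
  define G where "G y = F (SOME x. x \<in> cbox 0 One \<and> torus_embedding x = y)" for y
  have FG: "F x = G (torus_embedding x)" for x
  proof -
    define x' where "x' = (SOME x'. x' \<in> cbox 0 One \<and> torus_embedding x' = torus_embedding x)"
    have "\<exists>x'. x' \<in> cbox 0 One \<and> torus_embedding x' = torus_embedding x"
      using diff_lattice_floor_in_unit_cube[of x]
        lattice_periodic_reduce[OF lattice_periodic_torus_embedding, of x] by blast
    then have "torus_embedding x' = torus_embedding x"
      unfolding x'_def by (rule someI2_ex) blast
    from lattice_periodicD[OF per torus_embedding_eq_imp_int_vec[OF this], of x'] show ?thesis
      by (simp add: G_def x'_def[symmetric])
  qed
  have "continuous_on X G"
    unfolding continuous_openin_preimage_eq
  proof (intro allI impI)
    fix U :: "complex set"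
    assume "open U"
    have "cbox 0 One \<inter> torus_embedding -` (X \<inter> G -` U) = cbox 0 One \<inter> F -` U"
      using FG by (auto simp: X_def)
    then have "openin (top_of_set (cbox 0 One)) (cbox 0 One \<inter> torus_embedding -` (X \<inter> G -` U))"
      using continuous_openin_preimage_gen[OF continuous_on_subset[OF cont] \<open>open U\<close>] by auto
    then show "openin (top_of_set X) (X \<inter> G -` U)"
      using Abstract_Topology_2.continuous_imp_quotient_map[OF continuous_on_torus_embedding
          X_def[symmetric] compact_cbox, of "X \<inter> G -` U"]
      by auto
  qed
  with FG show ?thesis using that X_def by blast
qed

lemma trig_poly_approximation:
  fixes F :: "real^'d \<Rightarrow> complex"
  assumes cont: "continuous_on UNIV F" and per: "lattice_periodic F" and "e > 0"
  obtains Q where "trig_poly Q" "\<And>x. x \<in> cbox 0 One \<Longrightarrow> norm (F x - Q x) \<le> e"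
proof -
  obtain G where G: "continuous_on (torus_embedding ` cbox 0 One) G"
    and FG: "\<And>x. F x = G (torus_embedding x)"
    using lattice_periodic_factor_torus_embedding[OF cont per] by blast
  have compact: "compact (torus_embedding ` cbox (0::real^'d) One)"
    by (intro compact_continuous_image continuous_on_torus_embedding compact_cbox)
  obtain p1 where p1: "real_polynomial_function p1"
    "\<And>y. y \<in> torus_embedding ` cbox 0 One \<Longrightarrow> \<bar>Re (G y) - p1 y\<bar> < e / 2"
    using Stone_Weierstrass_real_polynomial_function[OF compact, of "\<lambda>y. Re (G y)" "e / 2"] G \<open>e > 0\<close>
    by (auto intro: continuous_intros)
  obtain p2 where p2: "real_polynomial_function p2"
    "\<And>y. y \<in> torus_embedding ` cbox 0 One \<Longrightarrow> \<bar>Im (G y) - p2 y\<bar> < e / 2"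
    using Stone_Weierstrass_real_polynomial_function[OF compact, of "\<lambda>y. Im (G y)" "e / 2"] G \<open>e > 0\<close>
    by (auto intro: continuous_intros)
  define Q where "Q x = of_real (p1 (torus_embedding x)) + \<i> * of_real (p2 (torus_embedding x))" for x
  have "trig_poly Q"
    unfolding Q_def by (intro trig_poly.add trig_poly_mult trig_poly_const trig_poly_polynomial p1 p2)
  moreover have "norm (F x - Q x) \<le> e" if "x \<in> cbox 0 One" for x
  proof -
    have "norm (F x - Q x) \<le> \<bar>Re (F x - Q x)\<bar> + \<bar>Im (F x - Q x)\<bar>" by (rule cmod_le)
    also have "\<dots> \<le> e"
      using p1(2)[of "torus_embedding x"] p2(2)[of "torus_embedding x"] that by (simp add: Q_def FG)
    finally show ?thesis .
  qed
  ultimately show ?thesis using that by blast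
qed

text \<open>If all coefficients vanish, then \<open>\<integral>|F|\<^sup>2 = \<integral>F \<cdot> cnj (F - Q)\<close> for every trigonometric polynomial
  \<open>Q\<close>, and this is small when \<open>Q\<close> approximates \<open>F\<close> uniformly.\<close>
lemma integral_norm_square_le_approx:
  fixes F :: "real^'d \<Rightarrow> complex"
  assumes cont: "continuous_on UNIV F" and coeff: "\<And>k. int_vec k \<Longrightarrow> fourier_coeff F k = 0"
    and B: "\<And>x. norm (F x) \<le> B"
    and Q: "trig_poly Q" "\<And>x. x \<in> cbox 0 One \<Longrightarrow> norm (F x - Q x) \<le> e"
  shows "integral (cbox 0 One) (\<lambda>x. (norm (F x))\<^sup>2) \<le> B * e"
proof -
  have cont_Q: "continuous_on UNIV Q" by (rule continuous_on_trig_poly[OF Q(1)])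
  have "((\<lambda>x. F x * cnj (Q x)) has_integral 0) (cbox 0 One)"
    by (rule integral_mult_trig_poly_eq_0[OF cont coeff trig_poly_cnj[OF Q(1)]])
  moreover have int: "(\<lambda>x. F x * cnj (F x - Q x)) integrable_on cbox 0 One"
    by (intro integrable_continuous continuous_intros continuous_on_subset[OF cont]
        continuous_on_subset[OF cont_Q]) auto
  ultimately have "((\<lambda>x. F x * cnj (Q x) + F x * cnj (F x - Q x))
      has_integral (0 + integral (cbox 0 One) (\<lambda>x. F x * cnj (F x - Q x)))) (cbox 0 One)"
    by (intro has_integral_add integrable_integral)
  moreover have "F x * cnj (Q x) + F x * cnj (F x - Q x) = of_real ((norm (F x))\<^sup>2)" for x
  proof -
    have "F x * cnj (Q x) + F x * cnj (F x - Q x) = F x * cnj (F x)" by (simp add: algebra_simps)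
    also have "\<dots> = of_real ((norm (F x))\<^sup>2)" by (rule complex_norm_square[symmetric])
    finally show ?thesis .
  qed
  ultimately have "((\<lambda>x. of_real ((norm (F x))\<^sup>2)) has_integral
      integral (cbox 0 One) (\<lambda>x. F x * cnj (F x - Q x))) (cbox 0 One)"
    by (simp only: add_0_left)
  moreover have "(\<lambda>x. (norm (F x))\<^sup>2) integrable_on cbox 0 One"
    by (intro integrable_continuous continuous_intros continuous_on_subset[OF cont]) auto
  ultimately have "of_real (integral (cbox 0 One) (\<lambda>x. (norm (F x))\<^sup>2))
      = integral (cbox 0 One) (\<lambda>x. F x * cnj (F x - Q x))"
    by (simp only: integral_of_real_complex[symmetric] integral_unique)
  moreover have "norm (integral (cbox 0 One) (\<lambda>x. F x * cnj (F x - Q x))) \<le> B * e"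
  proof -
    have B0: "0 \<le> B" using order_trans[OF norm_ge_zero B] .
    have "norm (F x * cnj (F x - Q x)) \<le> B * e" if "x \<in> cbox 0 One" for x
    proof -
      have "norm (F x * cnj (F x - Q x)) = norm (F x) * norm (F x - Q x)"
        by (simp only: norm_mult complex_mod_cnj)
      also have "\<dots> \<le> B * e" using B[of x] Q(2)[OF that] B0 by (intro mult_mono) auto
      finally show ?thesis .
    qed
    moreover have "0 \<le> e"
      using order_trans[OF norm_ge_zero Q(2)[of 0]] by (simp add: mem_box_cart)
    then have "0 \<le> B * e" using B0 by simp
    ultimately show ?thesis
      using has_integral_bound[OF _ integrable_integral[OF int]] by simp
  qed
  ultimately show ?thesis by (metis abs_le_iff norm_of_real)
qed

lemma fourier_coeff_eq_0_imp_eq_0: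
  fixes F :: "real^'d \<Rightarrow> complex"
  assumes cont: "continuous_on UNIV F" and per: "lattice_periodic F"
    and coeff: "\<And>k. int_vec k \<Longrightarrow> fourier_coeff F k = 0"
  shows "F x = 0"
proof -
  obtain B where B: "\<And>x. norm (F x) \<le> B"
    using lattice_periodic_bounded[OF cont per] by blast
  have B0: "0 \<le> B" using order_trans[OF norm_ge_zero B] .
  define f where "f x = (norm (F x))\<^sup>2" for x
  have cont_f: "continuous_on UNIV f" unfolding f_def by (intro continuous_intros cont)
  have int_f: "f integrable_on cbox 0 One"
    by (rule integrable_continuous, rule continuous_on_subset[OF cont_f]) auto
  have "integral (cbox 0 One) f \<le> 0"
  proof (rule field_le_epsilon)
    fix e :: real
    assume "e > 0"
    then have "e / (B + 1) > 0" using B0 by simp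
    then obtain Q where Q: "trig_poly Q" "\<And>x. x \<in> cbox 0 One \<Longrightarrow> norm (F x - Q x) \<le> e / (B + 1)"
      using trig_poly_approximation[OF cont per] by blast
    have "integral (cbox 0 One) f \<le> B * (e / (B + 1))"
      using integral_norm_square_le_approx[OF cont coeff B Q] by (simp add: f_def[abs_def])
    also have "\<dots> \<le> e" using B0 \<open>e > 0\<close> by (simp add: field_simps)
    finally show "integral (cbox 0 One) f \<le> 0 + e" by simp
  qed
  moreover have "integral (cbox 0 One) f \<ge> 0"
    by (rule integral_nonneg[OF int_f]) (simp add: f_def)
  ultimately have "(f has_integral 0) (cbox 0 One)"
    using integrable_integral[OF int_f] by simp
  then have "f y = 0" if "y \<in> cbox 0 One" for y
    using has_integral_0_cbox_imp_0[OF continuous_on_subset[OF cont_f]] that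
    by (auto simp: f_def box_ne_empty)
  then have "F (x - lattice_floor x) = 0"
    using diff_lattice_floor_in_unit_cube[of x] by (simp add: f_def)
  then show ?thesis using lattice_periodic_reduce[OF per] by simp
qed

section \<open>Absolutely convergent Fourier series\<close>

lemma integral_sums_of_normally_convergent:
  fixes u :: "nat \<Rightarrow> 'a::euclidean_space \<Rightarrow> 'b::banach"
  assumes cont: "\<And>n. continuous_on (cbox a b) (u n)"
    and bound: "\<And>n x. x \<in> cbox a b \<Longrightarrow> norm (u n x) \<le> M n" and "summable M"
  shows "(\<lambda>n. integral (cbox a b) (u n)) sums integral (cbox a b) (\<lambda>x. \<Sum>n. u n x)"
proof -
  obtain I J where I: "\<And>N. ((\<lambda>x. \<Sum>n<N. u n x) has_integral I N) (cbox a b)"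
    and J: "((\<lambda>x. \<Sum>n. u n x) has_integral J) (cbox a b)" and "I \<longlonglongrightarrow> J"
    by (rule uniform_limit_integral_cbox[OF Weierstrass_m_test[OF bound \<open>summable M\<close>]])
      (auto intro!: continuous_on_sum cont)
  have "I = (\<lambda>N. \<Sum>n<N. integral (cbox a b) (u n))"
    using integral_unique[OF I] integral_sum[of "{..<N}" u "cbox a b" for N]
      integrable_continuous[OF cont] by auto
  with \<open>I \<longlonglongrightarrow> J\<close> integral_unique[OF J] show ?thesis
    by (simp add: sums_def)
qed

definition lattice_enum :: "nat \<Rightarrow> real^'d" where
  "lattice_enum = from_nat_into {k. int_vec k}"

lemma countable_int_vec: "countable {k::real^'d. int_vec k}"
proof -
  have "{k::real^'d. int_vec k} \<subseteq> range (\<lambda>g::'d \<Rightarrow> int. \<chi> i. of_int (g i))"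
  proof
    fix k :: "real^'d"
    assume "k \<in> {k. int_vec k}"
    then have "k = (\<chi> i. of_int \<lfloor>k $ i\<rfloor>)" by (auto simp: int_vec_def vec_eq_iff)
    then show "k \<in> range (\<lambda>g::'d \<Rightarrow> int. \<chi> i. of_int (g i))" by (metis rangeI)
  qed
  then show ?thesis by (rule countable_subset) auto
qed

lemma infinite_int_vec: "infinite {k::real^'d. int_vec k}"
proof -
  have "inj (\<lambda>n::nat. real n *\<^sub>R (One::real^'d))"
    by (auto simp: inj_def vec_eq_iff)
  moreover have "range (\<lambda>n::nat. real n *\<^sub>R (One::real^'d)) \<subseteq> {k. int_vec k}"
    by (auto simp: int_vec_def)
  ultimately show ?thesis using infinite_iff_countable_subset by blast
qed

lemma bij_betw_lattice_enum: "bij_betw (lattice_enum :: nat \<Rightarrow> real^'d) UNIV {k. int_vec k}"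
  unfolding lattice_enum_def by (rule bij_betw_from_nat_into[OF countable_int_vec infinite_int_vec])

lemma int_vec_lattice_enum: "int_vec (lattice_enum n)"
  using bij_betw_lattice_enum by (auto simp: bij_betw_def)

lemma lattice_enum_eq_iff: "lattice_enum m = lattice_enum n \<longleftrightarrow> m = n"
  using bij_betw_lattice_enum by (auto simp: bij_betw_def inj_on_def)

lemma int_vec_imp_lattice_enum: "int_vec k \<Longrightarrow> \<exists>n. lattice_enum n = k"
  using bij_betw_lattice_enum unfolding bij_betw_def by (metis (mono_tags) imageE mem_Collect_eq)

lemma fourier_series_properties:
  fixes c :: "nat \<Rightarrow> complex"
  assumes summable: "summable (\<lambda>n. norm (c n))"
  defines "H \<equiv> \<lambda>x::real^'d. \<Sum>n. c n * torus_char (lattice_enum n) x"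
  shows "continuous_on UNIV H" and "lattice_periodic H" and "fourier_coeff H (lattice_enum m) = c m"
proof -
  have sums: "(\<lambda>n. c n * torus_char (lattice_enum n) x) sums H x" for x
    unfolding H_def
    by (rule summable_sums, rule summable_norm_cancel, rule summable_comparison_test[OF _ summable])
      (auto simp: norm_mult)
  have "uniform_limit UNIV (\<lambda>N x. \<Sum>n<N. c n * torus_char (lattice_enum n) x) H sequentially"
    unfolding H_def by (rule Weierstrass_m_test) (use summable in \<open>auto simp: norm_mult\<close>)
  then show "continuous_on UNIV H"
    by (rule uniform_limit_theorem[rotated]) (auto intro!: always_eventually continuous_intros)
  show "lattice_periodic H"
    by (auto simp: lattice_periodic_def H_def lattice_periodicD[OF lattice_periodic_torus_char]
        int_vec_lattice_enum)
  define k :: "real^'d" where "k = lattice_enum m"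
  have "(\<lambda>x. H x * torus_char (- k) x) = (\<lambda>x. \<Sum>n. c n * torus_char (lattice_enum n) x * torus_char (- k) x)"
    using suminf_mult2[OF sums_summable[OF sums]] by (simp add: H_def)
  then have "(\<lambda>n. integral (cbox 0 One) (\<lambda>x. c n * torus_char (lattice_enum n) x * torus_char (- k) x))
      sums fourier_coeff H k"
    unfolding fourier_coeff_def
    by (simp only:) (rule integral_sums_of_normally_convergent[where M = "\<lambda>n. norm (c n)"],
      auto intro!: continuous_intros simp: norm_mult summable)
  moreover have "integral (cbox 0 One) (\<lambda>x. c n * torus_char (lattice_enum n) x * torus_char (- k) x)
      = (if n = m then c m else 0)" for n
    using integral_torus_char[OF int_vec_diff[OF int_vec_lattice_enum int_vec_lattice_enum], of n m]
    by (auto simp: mult.assoc torus_char_mult k_def lattice_enum_eq_iff)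
  ultimately show "fourier_coeff H (lattice_enum m) = c m"
    using sums_single[of m "\<lambda>_. c m"] sums_unique2 by (simp add: k_def)
qed

lemma sums_fourier_series:
  fixes F :: "real^'d \<Rightarrow> complex"
  assumes cont: "continuous_on UNIV F" and per: "lattice_periodic F"
    and summable: "summable (\<lambda>n. norm (fourier_coeff F (lattice_enum n)))"
  shows "(\<lambda>n. fourier_coeff F (lattice_enum n) * torus_char (lattice_enum n) x) sums F x"
proof -
  define H where "H = (\<lambda>x::real^'d. \<Sum>n. fourier_coeff F (lattice_enum n) * torus_char (lattice_enum n) x)"
  note H = fourier_series_properties[where 'd = 'd, OF summable, folded H_def]
  have "fourier_coeff (\<lambda>x. H x - F x) k = 0" if "int_vec k" for k
    using int_vec_imp_lattice_enum[OF that] H(3) by (auto simp: fourier_coeff_diff H(1) cont)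
  then have "H x - F x = 0"
    by (rule fourier_coeff_eq_0_imp_eq_0[rotated 2]) (auto intro!: continuous_intros H(1) cont
        simp: lattice_periodic_def lattice_periodicD[OF H(2)] lattice_periodicD[OF per])
  moreover have "summable (\<lambda>n. fourier_coeff F (lattice_enum n) * torus_char (lattice_enum n) x)"
    by (rule summable_norm_cancel, rule summable_comparison_test[OF _ summable]) (auto simp: norm_mult)
  ultimately show ?thesis by (simp add: H_def sums_iff)
qed

section \<open>The weighted ergodic average\<close>

lemma gw_eq: "gw s = 1 - cos (2 * pi * s)"
  unfolding gw_def using cos_double_sin[of "pi * s"] by (simp add: mult.assoc)

lemma continuous_on_gw [continuous_intros]: "continuous_on S f \<Longrightarrow> continuous_on S (\<lambda>t. gw (f t))"
  by (rule continuous_on_compose2[of UNIV gw]) (auto simp: gw_def[abs_def] intro!: continuous_intros)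

lemma has_integral_gw:
  assumes "T > 0"
  shows "((\<lambda>t. gw (t / T)) has_integral T) {0..T}"
proof -
  define G where "G t = t - T / (2 * pi) * sin (2 * pi * t / T)" for t
  have "(G has_real_derivative gw (t / T)) (at t within {0..T})" for t
    unfolding G_def gw_eq using assms by (auto intro!: derivative_eq_intros simp: field_simps)
  then have "((\<lambda>t. gw (t / T)) has_integral (G T - G 0)) {0..T}"
    using assms by (intro fundamental_theorem_of_calculus) (auto simp: has_real_derivative_iff_has_vector_derivative)
  then show ?thesis using assms by (simp add: G_def)
qed

text \<open>The weight and its first derivative vanish at both ends of \<open>[0, T]\<close>, so two integrations by
  parts gain a factor \<open>1 / (a T)\<^sup>2\<close>.\<close>
lemma norm_integral_gw_cis_le:
  fixes a T :: real
  assumes a: "a \<noteq> 0" and T: "T > 0"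
  shows "norm (integral {0..T} (\<lambda>t. of_real (gw (t / T)) * cis (a * t))) \<le> 4 * pi\<^sup>2 / (a\<^sup>2 * T)"
proof -
  define G0 where "G0 t = 1 - cos (2 * pi * t / T)" for t
  define G1 where "G1 t = 2 * pi / T * sin (2 * pi * t / T)" for t
  define G2 where "G2 t = (2 * pi / T)\<^sup>2 * cos (2 * pi * t / T)" for t
  define c where "c = \<i> * complex_of_real a"
  have c: "c \<noteq> 0" using a by (simp add: c_def)
  define A where "A t = (of_real (G0 t) / c - of_real (G1 t) / c\<^sup>2) * cis (a * t)" for t
  define A' where "A' t = (of_real (G0 t) - of_real (G2 t) / c\<^sup>2) * cis (a * t)" for t
  have "(A has_vector_derivative A' t) (at t within {0..T})" for t
  proof -
    have "(G0 has_real_derivative G1 t) (at t)" "(G1 has_real_derivative G2 t) (at t)"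
      using T unfolding G0_def G1_def G2_def
      by (auto intro!: derivative_eq_intros simp: field_simps power2_eq_square)
    moreover have "((\<lambda>t. cis (a * t)) has_vector_derivative c * cis (a * t)) (at t)"
      by (auto intro!: derivative_eq_intros simp: c_def has_vector_derivative_complex_iff)
    ultimately have "(A has_vector_derivative
        (of_real (G0 t) / c - of_real (G1 t) / c\<^sup>2) * (c * cis (a * t))
        + (of_real (G1 t) / c - of_real (G2 t) / c\<^sup>2) * cis (a * t)) (at t)"
      unfolding A_def
      by (intro has_vector_derivative_mult has_vector_derivative_diff has_vector_derivative_divide
          has_vector_derivative_of_real)
    moreover have "(of_real (G0 t) / c - of_real (G1 t) / c\<^sup>2) * (c * cis (a * t))
        + (of_real (G1 t) / c - of_real (G2 t) / c\<^sup>2) * cis (a * t) = A' t"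
      using c by (simp add: A'_def field_simps power2_eq_square)
    ultimately show ?thesis by (simp add: has_vector_derivative_at_within)
  qed
  then have "(A' has_integral (A T - A 0)) {0..T}"
    using T by (intro fundamental_theorem_of_calculus) auto
  moreover have "A T = 0" "A 0 = 0" using T by (simp_all add: A_def G0_def G1_def)
  moreover have G2_int: "(\<lambda>t. of_real (G2 t) / c\<^sup>2 * cis (a * t)) integrable_on {0..T}"
    unfolding G2_def using T c by (intro integrable_continuous_interval continuous_intros) auto
  ultimately have "((\<lambda>t. of_real (G0 t) * cis (a * t)) has_integral
      integral {0..T} (\<lambda>t. of_real (G2 t) / c\<^sup>2 * cis (a * t))) {0..T}"
    using has_integral_add[OF _ integrable_integral[OF G2_int]] by (fastforce simp: A'_def algebra_simps)
  moreover have "norm (of_real (G2 t) / c\<^sup>2 * cis (a * t)) \<le> (2 * pi / T)\<^sup>2 / a\<^sup>2" for t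
    unfolding G2_def using a T abs_cos_le_one[of "2 * pi * t / T"]
    by (simp add: norm_mult norm_divide norm_power c_def abs_mult mult_left_le divide_right_mono)
  then have "norm (integral {0..T} (\<lambda>t. of_real (G2 t) / c\<^sup>2 * cis (a * t))) \<le> (2 * pi / T)\<^sup>2 / a\<^sup>2 * T"
    using has_integral_bound_real[OF _ finite.emptyI integrable_integral[OF G2_int], of "(2 * pi / T)\<^sup>2 / a\<^sup>2"] T
    by auto
  ultimately show ?thesis
    using T by (simp add: integral_unique gw_eq G0_def power2_eq_square field_simps)
qed

lemma norm_integral_gw_torus_char_le:
  fixes k \<omega> \<theta> :: "real^'d"
  assumes "k \<bullet> \<omega> \<noteq> 0" "T > 0"
  shows "norm (integral {0..T} (\<lambda>t. of_real (gw (t / T)) * torus_char k (\<theta> + t *\<^sub>R \<omega>)))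
    \<le> 1 / ((k \<bullet> \<omega>)\<^sup>2 * T)"
proof -
  have "(\<lambda>t. of_real (gw (t / T)) * torus_char k (\<theta> + t *\<^sub>R \<omega>))
      = (\<lambda>t. torus_char k \<theta> * (of_real (gw (t / T)) * cis (2 * pi * (k \<bullet> \<omega>) * t)))"
    by (simp add: torus_char_add) (simp add: torus_char_def mult_ac)
  then have "norm (integral {0..T} (\<lambda>t. of_real (gw (t / T)) * torus_char k (\<theta> + t *\<^sub>R \<omega>)))
      = norm (integral {0..T} (\<lambda>t. of_real (gw (t / T)) * cis (2 * pi * (k \<bullet> \<omega>) * t)))"
    by (simp add: norm_mult)
  also have "\<dots> \<le> 4 * pi\<^sup>2 / ((2 * pi * (k \<bullet> \<omega>))\<^sup>2 * T)"
    using assms by (intro norm_integral_gw_cis_le) auto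
  also have "\<dots> = 1 / ((k \<bullet> \<omega>)\<^sup>2 * T)"
    by (simp add: power2_eq_square)
  finally show ?thesis .
qed

lemma diophantine_nonneg:
  assumes "diophantine c \<tau> (\<omega>::real^'d)"
  shows "\<tau> \<ge> 0"
proof -
  have "1 \<le> real CARD('d)" by (simp add: Suc_le_eq)
  moreover have "\<tau> \<ge> real CARD('d) - 1" using assms by (simp add: diophantine_def)
  ultimately show ?thesis by linarith
qed

lemma diophantine_inverse_square_le:
  fixes \<omega> :: "real^'d"
  assumes dio: "diophantine c \<tau> \<omega>" and k: "int_vec k" "k \<noteq> 0"
  shows "k \<bullet> \<omega> \<noteq> 0" and "1 / (k \<bullet> \<omega>)\<^sup>2 \<le> (1 + norm k) powr (2 * \<tau>) / c\<^sup>2"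
proof -
  have c: "c > 0" and lower: "c * norm k powr (- \<tau>) < \<bar>k \<bullet> \<omega>\<bar>"
    using dio k by (auto simp: diophantine_def)
  have nk: "norm k > 0" using k by simp
  have pos: "0 < c * norm k powr (- \<tau>)" using c nk by simp
  then show "k \<bullet> \<omega> \<noteq> 0" using lower by auto
  have "(c * norm k powr (- \<tau>))\<^sup>2 \<le> (k \<bullet> \<omega>)\<^sup>2"
    using lower pos by (metis abs_ge_zero less_le power2_abs power_mono)
  moreover have "(c * norm k powr (- \<tau>))\<^sup>2 * norm k powr (2 * \<tau>) = c\<^sup>2"
    using nk by (simp add: power_mult_distrib power2_eq_square mult_ac flip: powr_add)
  ultimately have "c\<^sup>2 \<le> (k \<bullet> \<omega>)\<^sup>2 * norm k powr (2 * \<tau>)"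
    by (metis mult_right_mono powr_ge_zero)
  also have "\<dots> \<le> (k \<bullet> \<omega>)\<^sup>2 * (1 + norm k) powr (2 * \<tau>)"
    using diophantine_nonneg[OF dio] by (intro mult_left_mono powr_mono2) auto
  finally show "1 / (k \<bullet> \<omega>)\<^sup>2 \<le> (1 + norm k) powr (2 * \<tau>) / c\<^sup>2"
    using c \<open>k \<bullet> \<omega> \<noteq> 0\<close> by (simp add: field_simps)
qed

lemma norm_integral_gw_torus_char_diophantine_le:
  fixes \<omega> \<theta> k :: "real^'d"
  assumes dio: "diophantine c \<tau> \<omega>" and k: "int_vec k" "k \<noteq> 0" and T: "T > 0"
  shows "norm (integral {0..T} (\<lambda>t. of_real (gw (t / T)) * torus_char k (\<theta> + t *\<^sub>R \<omega>)))
    \<le> (1 + norm k) powr (2 * \<tau>) / (c\<^sup>2 * T)"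
proof -
  have "norm (integral {0..T} (\<lambda>t. of_real (gw (t / T)) * torus_char k (\<theta> + t *\<^sub>R \<omega>)))
      \<le> 1 / ((k \<bullet> \<omega>)\<^sup>2 * T)"
    by (rule norm_integral_gw_torus_char_le[OF diophantine_inverse_square_le(1)[OF dio k] T])
  also have "\<dots> \<le> (1 + norm k) powr (2 * \<tau>) / (c\<^sup>2 * T)"
    using divide_right_mono[OF diophantine_inverse_square_le(2)[OF dio k], of T] T
    by (simp add: divide_divide_eq_left)
  finally show ?thesis .
qed

lemma summable_weighted_fourier_coeff:
  fixes h :: "real^'d \<Rightarrow> real"
  assumes Ck: "Ck l h" and per: "lattice_periodic h" and l: "real l > real CARD('d) + a"
  shows "summable (\<lambda>n. norm (fourier_coeff (\<lambda>x. of_real (h x)) (lattice_enum n))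
    * (1 + norm (lattice_enum n :: real^'d)) powr a)"
proof -
  define w where "w n = (1 + norm (lattice_enum n :: real^'d)) powr (a - real l)" for n
  obtain M where M: "\<And>k. int_vec k \<Longrightarrow>
      norm (fourier_coeff (\<lambda>x. of_real (h x)) k) \<le> M * (1 + norm k) powr (- real l)"
    using fourier_coeff_decay[OF Ck per] by blast
  obtain B where B: "\<And>S::(real^'d) set. finite S \<Longrightarrow> S \<subseteq> {k. int_vec k} \<Longrightarrow>
      (\<Sum>k\<in>S. (1 + norm k) powr (a - real l)) \<le> B"
    using lattice_sum_powr_bounded[where 'd = 'd, of "real l - a"] l by auto
  have "(\<Sum>n<N. w n) \<le> B" for N
  proof -
    have "inj_on (lattice_enum :: nat \<Rightarrow> real^'d) {..<N}" by (auto simp: inj_on_def lattice_enum_eq_iff)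
    then have "(\<Sum>n<N. w n) = (\<Sum>k\<in>lattice_enum ` {..<N}. (1 + norm (k::real^'d)) powr (a - real l))"
      by (simp add: sum.reindex w_def)
    also have "\<dots> \<le> B" by (rule B) (auto intro: int_vec_lattice_enum)
    finally show ?thesis .
  qed
  then have "summable w" by (intro summableI_nonneg_bounded) (auto simp: w_def)
  have bound: "norm (fourier_coeff (\<lambda>x. of_real (h x)) (lattice_enum n))
      * (1 + norm (lattice_enum n :: real^'d)) powr a \<le> \<bar>M\<bar> * w n" for n
  proof -
    have "norm (fourier_coeff (\<lambda>x. of_real (h x)) (lattice_enum n))
        * (1 + norm (lattice_enum n :: real^'d)) powr a \<le> \<bar>M\<bar> * (1 + norm (lattice_enum n :: real^'d)) powr (- real l)
        * (1 + norm (lattice_enum n :: real^'d)) powr a"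
    proof (rule mult_right_mono)
      show "norm (fourier_coeff (\<lambda>x. of_real (h x)) (lattice_enum n))
          \<le> \<bar>M\<bar> * (1 + norm (lattice_enum n :: real^'d)) powr (- real l)"
        using M[OF int_vec_lattice_enum, of n] by (meson abs_ge_self mult_right_mono order_trans powr_ge_zero)
    qed simp
    also have "\<dots> = \<bar>M\<bar> * w n" by (simp add: w_def mult.assoc flip: powr_add)
    finally show ?thesis .
  qed
  show ?thesis
    by (rule summable_comparison_test[OF _ summable_mult[OF \<open>summable w\<close>, of "\<bar>M\<bar>"]])
      (use bound in auto)
qed

lemma sums_integral_weighted_orbit:
  fixes F :: "real^'d \<Rightarrow> complex" and g :: "real \<Rightarrow> complex"
  assumes cont: "continuous_on UNIV F" and per: "lattice_periodic F"
    and summable: "summable (\<lambda>n. norm (fourier_coeff F (lattice_enum n)))"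
    and cont_g: "continuous_on {a..b} g"
  shows "(\<lambda>n. fourier_coeff F (lattice_enum n)
      * integral {a..b} (\<lambda>t. g t * torus_char (lattice_enum n) (\<theta> + t *\<^sub>R \<omega>)))
    sums integral {a..b} (\<lambda>t. g t * F (\<theta> + t *\<^sub>R \<omega>))"
proof -
  define c where "c n = fourier_coeff F (lattice_enum n)" for n
  have "compact (g ` {a..b})" by (rule compact_continuous_image[OF cont_g compact_Icc])
  then obtain G where "\<And>y. y \<in> g ` {a..b} \<Longrightarrow> norm y \<le> G"
    using compact_imp_bounded bounded_iff by metis
  then have G: "\<And>t. t \<in> {a..b} \<Longrightarrow> norm (g t) \<le> G" by blast
  define u where "u n t = g t * (c n * torus_char (lattice_enum n) (\<theta> + t *\<^sub>R \<omega>))" for n t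
  have "continuous_on (cbox a b) (u n)" for n
    unfolding u_def using cont_g
    by (auto intro!: continuous_intros continuous_on_compose2[OF continuous_on_torus_char])
  moreover have "norm (u n t) \<le> G * norm (c n)" if "t \<in> cbox a b" for n t
    using G[of t] that by (simp add: u_def norm_mult mult_right_mono)
  moreover have "summable (\<lambda>n. G * norm (c n))"
    using summable by (simp add: c_def summable_mult)
  ultimately have "(\<lambda>n. integral (cbox a b) (u n)) sums integral (cbox a b) (\<lambda>t. \<Sum>n. u n t)"
    by (rule integral_sums_of_normally_convergent)
  then have "(\<lambda>n. integral {a..b} (\<lambda>t. g t * (c n * torus_char (lattice_enum n) (\<theta> + t *\<^sub>R \<omega>))))
      sums integral {a..b} (\<lambda>t. \<Sum>n. g t * (c n * torus_char (lattice_enum n) (\<theta> + t *\<^sub>R \<omega>)))"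
    by (simp add: u_def[abs_def])
  moreover have "(\<Sum>n. g t * (c n * torus_char (lattice_enum n) (\<theta> + t *\<^sub>R \<omega>))) = g t * F (\<theta> + t *\<^sub>R \<omega>)" for t
    using sums_mult[OF sums_fourier_series[OF cont per summable], of "g t"] by (simp add: c_def sums_iff)
  moreover have "integral {a..b} (\<lambda>t. g t * (c n * torus_char (lattice_enum n) (\<theta> + t *\<^sub>R \<omega>)))
      = c n * integral {a..b} (\<lambda>t. g t * torus_char (lattice_enum n) (\<theta> + t *\<^sub>R \<omega>))" for n
    by (subst mult.left_commute) simp
  ultimately show ?thesis by (simp add: c_def)
qed

lemma fourier_coeff_zero_of_real:
  assumes "continuous_on UNIV h"
  shows "fourier_coeff (\<lambda>x. of_real (h x)) 0 = of_real (integral (cbox 0 One) (h :: real^'d \<Rightarrow> real))"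
  unfolding fourier_coeff_def
  using integral_of_real_complex[OF integrable_continuous[OF continuous_on_subset[OF assms]]] by simp

lemma norm_sums_minus_term_le:
  fixes f :: "nat \<Rightarrow> 'a::banach"
  assumes "f sums s" "summable g" "\<And>n. 0 \<le> g n" "\<And>n. n \<noteq> n0 \<Longrightarrow> norm (f n) \<le> g n"
  shows "norm (s - f n0) \<le> suminf g"
proof -
  have "(\<lambda>n. f n - (if n = n0 then f n0 else 0)) sums (s - f n0)"
    by (intro sums_diff assms(1) sums_single)
  moreover have "norm (f n - (if n = n0 then f n0 else 0)) \<le> g n" for n
    using assms(3,4) by (cases "n = n0") auto
  then have "norm (\<Sum>n. f n - (if n = n0 then f n0 else 0)) \<le> suminf g"
    using assms(2) by (rule norm_suminf_le)
  ultimately show ?thesis by (simp add: sums_iff)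
qed

lemma norm_weighted_average_minus_mean_le:
  fixes F :: "real^'d \<Rightarrow> complex"
  defines "cf \<equiv> \<lambda>n. fourier_coeff F (lattice_enum n)"
  assumes cont: "continuous_on UNIV F" and per: "lattice_periodic F" and dio: "diophantine c \<tau> \<omega>"
    and summable: "summable (\<lambda>n. norm (cf n) * (1 + norm (lattice_enum n :: real^'d)) powr (2 * \<tau>))"
    and T: "T > 0"
  shows "norm (integral {0..T} (\<lambda>t. of_real (gw (t / T)) * F (\<theta> + t *\<^sub>R \<omega>)) / of_real T - fourier_coeff F 0)
    \<le> (\<Sum>n. norm (cf n) * (1 + norm (lattice_enum n :: real^'d)) powr (2 * \<tau>)) / (c\<^sup>2 * T\<^sup>2)"
proof -
  define u where "u n = norm (cf n) * (1 + norm (lattice_enum n :: real^'d)) powr (2 * \<tau>)" for n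
  define K where "K k = integral {0..T} (\<lambda>t. of_real (gw (t / T)) * torus_char k (\<theta> + t *\<^sub>R \<omega>))"
    for k :: "real^'d"
  have c: "c > 0" using dio by (simp add: diophantine_def)
  have "summable (\<lambda>n. norm (cf n))"
    using diophantine_nonneg[OF dio]
    by (intro summable_comparison_test[OF _ summable]) (auto simp: mult_le_cancel_left1 ge_one_powr_ge_zero)
  then have "(\<lambda>n. cf n * K (lattice_enum n))
      sums integral {0..T} (\<lambda>t. of_real (gw (t / T)) * F (\<theta> + t *\<^sub>R \<omega>))"
    unfolding cf_def K_def using T
    by (intro sums_integral_weighted_orbit cont per) (auto intro!: continuous_intros)
  then have sums: "(\<lambda>n. cf n * K (lattice_enum n) / of_real T)
      sums (integral {0..T} (\<lambda>t. of_real (gw (t / T)) * F (\<theta> + t *\<^sub>R \<omega>)) / of_real T)"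
    by (rule sums_divide)
  obtain n0 where n0: "lattice_enum n0 = (0::real^'d)"
    using int_vec_imp_lattice_enum[of 0] by auto
  have "norm (cf n * K (lattice_enum n) / of_real T) \<le> u n / (c\<^sup>2 * T\<^sup>2)" if "n \<noteq> n0" for n
  proof -
    have k: "int_vec (lattice_enum n)" "(lattice_enum n :: real^'d) \<noteq> 0"
      using that n0 int_vec_lattice_enum lattice_enum_eq_iff by metis+
    have "norm (cf n * K (lattice_enum n) / of_real T) = norm (cf n) * norm (K (lattice_enum n)) / T"
      using T by (simp add: norm_mult norm_divide)
    also have "\<dots> \<le> norm (cf n) * ((1 + norm (lattice_enum n :: real^'d)) powr (2 * \<tau>) / (c\<^sup>2 * T)) / T"
      unfolding K_def using norm_integral_gw_torus_char_diophantine_le[OF dio k T] T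
      by (intro divide_right_mono mult_left_mono) auto
    also have "\<dots> = u n / (c\<^sup>2 * T\<^sup>2)"
      using c T by (simp add: u_def power2_eq_square field_simps)
    finally show ?thesis .
  qed
  then have "norm (integral {0..T} (\<lambda>t. of_real (gw (t / T)) * F (\<theta> + t *\<^sub>R \<omega>)) / of_real T
      - cf n0 * K (lattice_enum n0) / of_real T) \<le> (\<Sum>n. u n / (c\<^sup>2 * T\<^sup>2))"
    by (intro norm_sums_minus_term_le[OF sums] summable_divide[OF summable[folded u_def]]) (auto simp: u_def)
  moreover have "K 0 = of_real T"
    using has_integral_of_real[where 'b = complex, OF has_integral_gw[OF T]]
    by (simp add: K_def integral_unique)
  ultimately show ?thesis
    using T by (simp add: n0 cf_def u_def suminf_divide[OF summable[unfolded cf_def]])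
qed

lemma weighted_average_error_le:
  fixes h :: "real^'d \<Rightarrow> real"
  defines "cf \<equiv> \<lambda>n. fourier_coeff (\<lambda>x. of_real (h x)) (lattice_enum n)"
  assumes cont: "continuous_on UNIV h" and per: "lattice_periodic h" and dio: "diophantine c \<tau> \<omega>"
    and summable: "summable (\<lambda>n. norm (cf n) * (1 + norm (lattice_enum n :: real^'d)) powr (2 * \<tau>))"
    and T: "T > 0"
  shows "\<bar>(1 / T) * integral {0..T} (\<lambda>t. gw (t / T) * h (\<theta> + t *\<^sub>R \<omega>)) - integral (cbox 0 One) h\<bar>
    \<le> (\<Sum>n. norm (cf n) * (1 + norm (lattice_enum n :: real^'d)) powr (2 * \<tau>)) / (c\<^sup>2 * T\<^sup>2)"
proof -
  have "lattice_periodic (\<lambda>x. complex_of_real (h x))"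
    by (simp add: lattice_periodic_def lattice_periodicD[OF per])
  note bound = norm_weighted_average_minus_mean_le[OF _ this dio summable[unfolded cf_def] T, of \<theta>]
  have "integral {0..T} (\<lambda>t. complex_of_real (gw (t / T)) * of_real (h (\<theta> + t *\<^sub>R \<omega>)))
      = of_real (integral {0..T} (\<lambda>t. gw (t / T) * h (\<theta> + t *\<^sub>R \<omega>)))"
    using T by (subst integral_of_real_complex[symmetric])
      (auto intro!: integrable_continuous_interval continuous_intros continuous_on_compose2[OF cont])
  with bound fourier_coeff_zero_of_real[OF cont] T show ?thesis
    by (simp add: cf_def norm_divide continuous_intros cont flip: of_real_divide of_real_diff)
qed

theorem mainTheorem4:
  fixes \<omega> :: "real^'d" and c \<tau> :: real and l :: nat and h :: "real^'d \<Rightarrow> real"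
  assumes "diophantine c \<tau> \<omega>"
    and "torus_periodic h"
    and "Ck l h"
    and "real l > real CARD('d) + 2 * \<tau>"
  shows "\<exists>C>0. \<forall>\<theta>::real^'d. \<forall>T::real. T > 0 \<longrightarrow>
    \<bar>(1 / T) * integral {0..T} (\<lambda>t. gw (t / T) * h (\<theta> + t *\<^sub>R \<omega>))
       - integral (cbox 0 One) h\<bar> \<le> C * T powr (-2)"
proof -
  have per: "lattice_periodic h"
    using assms(2) by (simp add: lattice_periodic_def torus_periodic_def)
  define S where "S = (\<Sum>n. norm (fourier_coeff (\<lambda>x. of_real (h x)) (lattice_enum n))
    * (1 + norm (lattice_enum n :: real^'d)) powr (2 * \<tau>))"
  have summable: "summable (\<lambda>n. norm (fourier_coeff (\<lambda>x. of_real (h x)) (lattice_enum n))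
    * (1 + norm (lattice_enum n :: real^'d)) powr (2 * \<tau>))"
    by (rule summable_weighted_fourier_coeff[OF assms(3) per assms(4)])
  then have "S \<ge> 0" unfolding S_def by (intro suminf_nonneg) auto
  have "c > 0" using assms(1) by (simp add: diophantine_def)
  have scale: "S / (c\<^sup>2 * T\<^sup>2) \<le> (S / c\<^sup>2 + 1) * T powr (-2)" if "T > 0" for T
    using that \<open>S \<ge> 0\<close> \<open>c > 0\<close> by (simp add: powr_minus field_simps)
  note error = weighted_average_error_le[OF Ck_imp_continuous_on[OF assms(3)] per assms(1) summable,
      folded S_def]
  show ?thesis
    using \<open>S \<ge> 0\<close> by (intro exI[of _ "S / c\<^sup>2 + 1"] conjI allI impI order_trans[OF error scale])
      (auto simp: add_nonneg_pos)
qed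

end
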